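(* Let $C_0,C_1,C_2$ be the constants of the following fact: for the Square-Root SLOPE estimator $\hat\beta$ (with $A\ge16+4\sqrt2$), for all $\delta\in(0,1]$ and $n_1>\frac{C_0}{\delta^2}s\log(\frac{ep}{s})$, $\sup_{|\beta|_0\le s}\mathbf P_\beta(\|\hat\beta-\beta\|\ge\delta\sigma)\le C_1(\frac{s}{2p})^{C_2s}$. Let $s\le p/2$, $a\le\sigma$, $\delta\in(0,1]$, and assume $$n_1>\frac{C_0}{\delta^2}s\log\Big(\frac{ep}{s}\Big),\qquad n_2\ge\frac{4\sigma^2\log(\frac ps-1)}{a^2}.$$ Let $\hat\eta$ be the selector defined below with threshold $t=t_{\sigma\sqrt{1+\delta^2}}$. Then $$\sup_{\beta\in\Omega^p_{s,a}}\mathbf E_\beta|\hat\eta-\eta_\beta|\le2\sqrt{s(p-s)}\exp\Big(-\frac{n_2}{2}\log\Big(1+\frac{a^2}{4\sigma^2(1+\delta^2)}\Big)\Big)+se^{-n_2/24}+C_1p\Big(\frac{s}{2p}\Big)^{C_2s},$$ $$\sup_{\beta\in\Omega^p_{s,a}}\mathbf P_\beta(\hat\eta\neq\eta_\beta)\le2\sqrt{s(p-s)}\exp\Big(-\frac{n_2}{2}\log\Big(1+\frac{a^2}{4\sigma^2(1+\delta^2)}\Big)\Big)+se^{-n_2/24}+C_1\Big(\frac{s}{2p}\Big)^{C_2s}.$$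
   Context: Model: $Y=X\beta+\sigma\xi\in\mathbb{R}^n$, $X\in\mathbb{R}^{n\times p}$ with i.i.d. $\mathcal N(0,1)$ entries, $\xi\sim\mathcal N(0,\mathbb I_n)$ independent of $X$, $\sigma>0$. $\Omega^p_{s,a}=\{\beta\in\mathbb{R}^p:|\beta|_0\le s,\ |\beta_i|\ge a \text{ whenever }\beta_i\ne0\}$, $\eta_\beta=(\mathbf 1\{\beta_i\neq0\})_{i\le p}$, $|\cdot|$ Hamming distance. The sample is split into disjoint subsamples $(X^{(1)},Y^{(1)})$ of size $n_1$ and $(X^{(2)},Y^{(2)})$ of size $n_2$, $n=n_1+n_2$. $\hat\beta$ is the Square-Root SLOPE estimator on the first subsample: $\hat\beta\in\arg\min_\beta\big(\|Y^{(1)}-X^{(1)}\beta\|/\sqrt{n_1}+2\sum_{j}\lambda_j\beta^*_j\big)$ with $\lambda_j=A\sqrt{\log(2p/j)/n}$ and $\beta^*_1\ge\dots\ge\beta^*_p$ the sorted $|\beta_i|$. The selector: $\hat\eta_i=\mathbf 1\Big\{\frac{|X_i^{(2)\top}(Y^{(2)}-\sum_{j\neq i}X^{(2)}_j\hat\beta_j)|}{\|X^{(2)}_i\|}>t(X^{(2)}_i)\Big\}$, $i=1,\dots,p$, where $X^{(2)}_i$ is the $i$th column of $X^{(2)}$. For $\sigma'>0$, $t_{\sigma'}(u)=\frac{a\|u\|}{2}+\frac{\sigma'^2\log(\frac ps-1)}{a\|u\|}$, $u\in\mathbb{R}^{n_2}$. *)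

theory Defs
  imports "HOL-Probability.Probability"
begin

(* Vectors in R^m are functions nat => real, read on indices {..<m}.
   Matrices are functions nat \<times> nat => real, entry (row i, column j). *)

definition gauss :: "real measure" where
  "gauss = density lborel std_normal_density"

definition model :: "nat \<Rightarrow> nat \<Rightarrow> ((nat \<times> nat \<Rightarrow> real) \<times> (nat \<Rightarrow> real)) measure" where
  "model n p = PiM ({..<n} \<times> {..<p}) (\<lambda>_. gauss) \<Otimes>\<^sub>M PiM {..<n} (\<lambda>_. gauss)"

definition Yv :: "nat \<Rightarrow> real \<Rightarrow> (nat \<Rightarrow> real) \<Rightarrow> (nat \<times> nat \<Rightarrow> real) \<times> (nat \<Rightarrow> real) \<Rightarrow> nat \<Rightarrow> real" where
  "Yv p \<sigma> \<beta> \<omega> i = (\<Sum>j<p. fst \<omega> (i, j) * \<beta> j) + \<sigma> * snd \<omega> i"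

definition vnorm :: "nat \<Rightarrow> (nat \<Rightarrow> real) \<Rightarrow> real" where
  "vnorm m u = sqrt (\<Sum>k<m. (u k)\<^sup>2)"

definition l0 :: "nat \<Rightarrow> (nat \<Rightarrow> real) \<Rightarrow> nat" where
  "l0 p \<beta> = card {j \<in> {..<p}. \<beta> j \<noteq> 0}"

definition sparse :: "nat \<Rightarrow> nat \<Rightarrow> (nat \<Rightarrow> real) \<Rightarrow> bool" where
  "sparse p s \<beta> \<longleftrightarrow> (\<forall>j\<ge>p. \<beta> j = 0) \<and> l0 p \<beta> \<le> s"

definition Omega :: "nat \<Rightarrow> nat \<Rightarrow> real \<Rightarrow> (nat \<Rightarrow> real) set" where
  "Omega p s a = {\<beta>. sparse p s \<beta> \<and> (\<forall>j<p. \<beta> j \<noteq> 0 \<longrightarrow> \<bar>\<beta> j\<bar> \<ge> a)}"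

definition slope_lambda :: "real \<Rightarrow> nat \<Rightarrow> nat \<Rightarrow> nat \<Rightarrow> real" where
  "slope_lambda A n p j = A * sqrt (ln (2 * real p / real j) / real n)"

(* beta^*_1 >= ... >= beta^*_p : the sorted |beta_i|; list index k is beta^*_{k+1} *)
definition sorted_abs :: "nat \<Rightarrow> (nat \<Rightarrow> real) \<Rightarrow> real list" where
  "sorted_abs p b = rev (sort (map (\<lambda>i. \<bar>b i\<bar>) [0..<p]))"

definition sqslope_obj :: "real \<Rightarrow> nat \<Rightarrow> nat \<Rightarrow> nat \<Rightarrow> (nat \<times> nat \<Rightarrow> real) \<Rightarrow> (nat \<Rightarrow> real) \<Rightarrow> (nat \<Rightarrow> real) \<Rightarrow> real" where
  "sqslope_obj A n n1 p X Y b =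
     sqrt (\<Sum>i<n1. (Y i - (\<Sum>j<p. X (i, j) * b j))\<^sup>2) / sqrt (real n1)
     + 2 * (\<Sum>k<p. slope_lambda A n p (k + 1) * (sorted_abs p b ! k))"

definition is_sqslope :: "real \<Rightarrow> nat \<Rightarrow> nat \<Rightarrow> nat \<Rightarrow> (nat \<times> nat \<Rightarrow> real) \<Rightarrow> (nat \<Rightarrow> real) \<Rightarrow> (nat \<Rightarrow> real) \<Rightarrow> bool" where
  "is_sqslope A n n1 p X Y b \<longleftrightarrow> (\<forall>j\<ge>p. b j = 0) \<and>
     (\<forall>c. (\<forall>j\<ge>p. c j = 0) \<longrightarrow> sqslope_obj A n n1 p X Y b \<le> sqslope_obj A n n1 p X Y c)"

definition fit :: "((nat \<times> nat \<Rightarrow> real) \<Rightarrow> (nat \<Rightarrow> real) \<Rightarrow> (nat \<Rightarrow> real)) \<Rightarrow> nat \<Rightarrow> nat \<Rightarrow> real \<Rightarrow> (nat \<Rightarrow> real)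
     \<Rightarrow> (nat \<times> nat \<Rightarrow> real) \<times> (nat \<Rightarrow> real) \<Rightarrow> nat \<Rightarrow> real" where
  "fit est n1 p \<sigma> \<beta> \<omega> = est (\<lambda>(i, j). if i < n1 \<and> j < p then fst \<omega> (i, j) else 0)
                                  (\<lambda>i. if i < n1 then Yv p \<sigma> \<beta> \<omega> i else 0)"

definition tthr :: "real \<Rightarrow> nat \<Rightarrow> nat \<Rightarrow> real \<Rightarrow> nat \<Rightarrow> (nat \<Rightarrow> real) \<Rightarrow> real" where
  "tthr a p s \<sigma>' n2 u = a * vnorm n2 u / 2 + \<sigma>'\<^sup>2 * ln (real p / real s - 1) / (a * vnorm n2 u)"

definition col2 :: "nat \<Rightarrow> (nat \<times> nat \<Rightarrow> real) \<times> (nat \<Rightarrow> real) \<Rightarrow> nat \<Rightarrow> nat \<Rightarrow> real" where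
  "col2 n1 \<omega> i = (\<lambda>k. fst \<omega> (n1 + k, i))"

definition selector :: "((nat \<Rightarrow> real) \<Rightarrow> real) \<Rightarrow> nat \<Rightarrow> nat \<Rightarrow> nat \<Rightarrow> real \<Rightarrow> (nat \<Rightarrow> real) \<Rightarrow> (nat \<Rightarrow> real)
     \<Rightarrow> (nat \<times> nat \<Rightarrow> real) \<times> (nat \<Rightarrow> real) \<Rightarrow> nat \<Rightarrow> bool" where
  "selector t n1 n2 p \<sigma> \<beta> bh \<omega> i \<longleftrightarrow>
     \<bar>\<Sum>k<n2. fst \<omega> (n1 + k, i) *
        (Yv p \<sigma> \<beta> \<omega> (n1 + k) - (\<Sum>j\<in>{..<p} - {i}. fst \<omega> (n1 + k, j) * bh j))\<bar>
       / vnorm n2 (col2 n1 \<omega> i) > t (col2 n1 \<omega> i)"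

definition hamming :: "nat \<Rightarrow> (nat \<Rightarrow> bool) \<Rightarrow> (nat \<Rightarrow> real) \<Rightarrow> nat" where
  "hamming p eta \<beta> = card {i \<in> {..<p}. eta i \<noteq> (\<beta> i \<noteq> 0)}"

end

theory Submission
  imports Defs
begin

text \<open>
  Fix a coordinate i and condition on the first subsample, which determines the estimate b, and on
  the i-th column u of the second design. The statistic of the selector is then
  beta_i |u|^2 plus a centred Gaussian of variance |u|^2 (sigma^2 + sum_{j ~= i} (beta_j - b_j)^2), which
  is at most |u|^2 s'^2, s'^2 = sigma^2 (1 + delta^2), as soon as |b - beta| < delta sigma. The threshold
  is the midpoint a|u|/2 shifted by s'^2 L / (a|u|), L = log (p/s - 1), so the Gaussian tail bound
  gives a conditional error at most exp (-+L/2) exp (- a^2 |u|^2 / (8 s'^2)), the sign depending on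
  whether beta_i = 0. Integrating over the chi-square variable |u|^2 turns the second factor into
  (1 + a^2 / (4 s'^2))^(-n2/2); summing exp (-L/2) over the at least p - s zero coordinates and
  exp (L/2) over the at most s nonzero ones gives 2 sqrt (s (p - s)); and the event
  |b - beta| >= delta sigma costs the estimation bound.
\<close>

section \<open>Gaussian tail and moment bounds\<close>

lemma prob_space_gauss [simp]: "prob_space gauss"
  unfolding gauss_def by (rule prob_space_normal_density) simp

lemma sets_gauss [simp, measurable_cong]: "sets gauss = sets borel"
  unfolding gauss_def by simp

lemma space_gauss [simp]: "space gauss = UNIV"
  unfolding gauss_def by simp

lemma nn_integral_normal_density: "0 < \<tau> \<Longrightarrow> (\<integral>\<^sup>+x. ennreal (normal_density \<mu> \<tau> x) \<partial>lborel) = 1"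
  by (subst nn_integral_eq_integral) (auto simp: normal_density_nonneg)

lemma normal_density_minus: "normal_density 0 \<tau> (- z) = normal_density 0 \<tau> z"
  unfolding normal_density_def by simp

lemma normal_density_shift_le:
  assumes "0 < \<tau>" "0 \<le> x" "x \<le> z"
  shows "normal_density 0 \<tau> z \<le> exp (- x\<^sup>2 / (2 * \<tau>\<^sup>2)) * normal_density 0 \<tau> (z - x)"
proof -
  have "x\<^sup>2 + (z - x)\<^sup>2 \<le> z\<^sup>2"
    using assms by (simp add: power2_eq_square algebra_simps mult_left_mono)
  then have "- z\<^sup>2 / (2 * \<tau>\<^sup>2) \<le> - x\<^sup>2 / (2 * \<tau>\<^sup>2) + - (z - x)\<^sup>2 / (2 * \<tau>\<^sup>2)"
    using assms by (simp add: divide_simps)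
  then have "exp (- z\<^sup>2 / (2 * \<tau>\<^sup>2)) \<le> exp (- x\<^sup>2 / (2 * \<tau>\<^sup>2)) * exp (- (z - x)\<^sup>2 / (2 * \<tau>\<^sup>2))"
    by (simp add: mult_exp_exp)
  then show ?thesis
    unfolding normal_density_def using assms by (simp add: divide_right_mono)
qed

lemma normal_density_two_sided_shift_le:
  assumes "0 < \<tau>" "0 \<le> x"
  shows "normal_density 0 \<tau> z * indicator {z. x \<le> \<bar>z\<bar>} z
    \<le> exp (- x\<^sup>2 / (2 * \<tau>\<^sup>2)) * (normal_density 0 \<tau> (z - x) * indicator {x..} z
                                 + normal_density 0 \<tau> (z + x) * indicator {..-x} z)"
proof (cases "x \<le> z")
  case True
  have "exp (- x\<^sup>2 / (2 * \<tau>\<^sup>2)) * normal_density 0 \<tau> (z - x)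
    \<le> exp (- x\<^sup>2 / (2 * \<tau>\<^sup>2)) * (normal_density 0 \<tau> (z - x) * indicator {x..} z
                                 + normal_density 0 \<tau> (z + x) * indicator {..-x} z)"
    using True by (intro mult_left_mono) (auto simp: indicator_def)
  moreover have "normal_density 0 \<tau> z * indicator {z. x \<le> \<bar>z\<bar>} z = normal_density 0 \<tau> z"
    using True assms by (simp add: indicator_def)
  ultimately show ?thesis
    using normal_density_shift_le[OF assms True] by linarith
next
  case False
  show ?thesis
  proof (cases "x \<le> - z")
    case True
    then have "normal_density 0 \<tau> z \<le> exp (- x\<^sup>2 / (2 * \<tau>\<^sup>2)) * normal_density 0 \<tau> (z + x)"
      using normal_density_shift_le[OF assms True] by (simp add: normal_density_minus[of \<tau> "z + x", symmetric])
        (simp add: normal_density_minus[of \<tau> z, symmetric] algebra_simps)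
    then show ?thesis using True False assms by (simp add: indicator_def)
  qed (use False in \<open>auto simp: indicator_def\<close>)
qed

lemma normal_tail_le:
  assumes \<tau>: "0 < \<tau>" and x: "0 \<le> x"
  shows "emeasure (density lborel (normal_density 0 \<tau>)) {z. x \<le> \<bar>z\<bar>} \<le> exp (- x\<^sup>2 / (2 * \<tau>\<^sup>2))"
proof -
  define e where "e = exp (- x\<^sup>2 / (2 * \<tau>\<^sup>2))"
  let ?f = "normal_density 0 \<tau>"
  have "emeasure (density lborel ?f) {z. x \<le> \<bar>z\<bar>} = (\<integral>\<^sup>+z. ennreal (?f z * indicator {z. x \<le> \<bar>z\<bar>} z) \<partial>lborel)"
    by (subst emeasure_density) (auto intro!: nn_integral_cong simp: indicator_def)
  also have "\<dots> \<le> (\<integral>\<^sup>+z. e * (ennreal (?f (z - x)) * indicator {x..} z + ennreal (?f (z + x)) * indicator {..-x} z) \<partial>lborel)"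
    using normal_density_two_sided_shift_le[OF \<tau> x]
    by (intro nn_integral_mono)
       (simp add: e_def ennreal_mult'[symmetric] indicator_mult_ennreal mult.commute ennreal_plus[symmetric] del: ennreal_plus)
  also have "\<dots> = e * ((\<integral>\<^sup>+z. ennreal (?f (z - x)) * indicator {x..} z \<partial>lborel)
                     + (\<integral>\<^sup>+z. ennreal (?f (z + x)) * indicator {..-x} z \<partial>lborel))"
    by (subst nn_integral_cmult, simp, subst nn_integral_add) auto
  also have "(\<integral>\<^sup>+z. ennreal (?f (z - x)) * indicator {x..} z \<partial>lborel) = (\<integral>\<^sup>+z. ennreal (?f z) * indicator {0..} z \<partial>lborel)"
    by (subst nn_integral_real_affine[where c=1 and t=x]) (auto intro!: nn_integral_cong simp: indicator_def)
  also have "(\<integral>\<^sup>+z. ennreal (?f (z + x)) * indicator {..-x} z \<partial>lborel) = (\<integral>\<^sup>+z. ennreal (?f z) * indicator {..0} z \<partial>lborel)"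
    by (subst nn_integral_real_affine[where c=1 and t="-x"]) (auto intro!: nn_integral_cong simp: indicator_def)
  also have "(\<integral>\<^sup>+z. ennreal (?f z) * indicator {0..} z \<partial>lborel) + (\<integral>\<^sup>+z. ennreal (?f z) * indicator {..0} z \<partial>lborel)
           = (\<integral>\<^sup>+z. ennreal (?f z) \<partial>lborel)"
    by (subst nn_integral_add[symmetric]; (intro nn_integral_cong_AE)?)
       (use AE_lborel_singleton[of 0] in \<open>auto elim!: eventually_mono simp: indicator_def\<close>)
  also have "\<dots> = 1" using nn_integral_normal_density[OF \<tau>] .
  finally show ?thesis by (simp add: e_def)
qed

lemma nn_integral_gauss_exp_square:
  assumes \<kappa>: "0 \<le> \<kappa>"
  shows "(\<integral>\<^sup>+x. ennreal (exp (- \<kappa> * x\<^sup>2)) \<partial>gauss) = ennreal (1 / sqrt (1 + 2 * \<kappa>))"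
proof -
  define c where "c = 1 + 2 * \<kappa>"
  have c: "0 < c" using \<kappa> by (simp add: c_def)
  have eq: "normal_density 0 1 x * exp (- \<kappa> * x\<^sup>2) = (1 / sqrt c) * normal_density 0 (1 / sqrt c) x" for x
  proof -
    have "exp (- x\<^sup>2 / 2) * exp (- \<kappa> * x\<^sup>2) = exp (- (x\<^sup>2 * c) / 2)"
      by (simp add: mult_exp_exp c_def field_simps)
    moreover have "1 / sqrt (2 * pi * (1 / sqrt c)\<^sup>2) = sqrt c / sqrt (2 * pi)"
      using c by (simp add: power_divide real_sqrt_divide real_sqrt_mult)
    ultimately show ?thesis using c
      by (simp add: normal_density_def power_divide field_simps)
  qed
  have "(\<integral>\<^sup>+x. ennreal (exp (- \<kappa> * x\<^sup>2)) \<partial>gauss)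
      = (\<integral>\<^sup>+x. ennreal (normal_density 0 1 x * exp (- \<kappa> * x\<^sup>2)) \<partial>lborel)"
    unfolding gauss_def by (subst nn_integral_density) (auto simp: ennreal_mult)
  also have "\<dots> = (\<integral>\<^sup>+x. ennreal (1 / sqrt c) * ennreal (normal_density 0 (1 / sqrt c) x) \<partial>lborel)"
    by (intro nn_integral_cong, subst eq, intro ennreal_mult') (use c in simp)
  also have "\<dots> = ennreal (1 / sqrt c)"
    using c by (subst nn_integral_cmult) (auto simp: nn_integral_normal_density)
  finally show ?thesis by (simp add: c_def)
qed

lemma power_inverse_sqrt_eq_exp_ln:
  "0 < (c::real) \<Longrightarrow> (1 / sqrt c) ^ n = exp (- real n / 2 * ln c)"
  by (simp add: powr_half_sqrt[symmetric] powr_def exp_minus inverse_eq_divide exp_of_nat_mult[symmetric]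
      power_divide field_simps)

lemma distr_PiM_gauss_component: "m \<in> I \<Longrightarrow> distr (PiM I (\<lambda>_. gauss)) gauss (\<lambda>z. z m) = gauss"
  by (rule distr_PiM_component) auto

interpretation gauss_product: product_sigma_finite "\<lambda>_. gauss"
  unfolding product_sigma_finite_def by (auto intro: prob_space_imp_sigma_finite)

lemma nn_integral_PiM_gauss_exp_sum_squares:
  assumes I: "finite I" and U: "U \<subseteq> I" and \<kappa>: "0 \<le> \<kappa>"
  shows "(\<integral>\<^sup>+y. ennreal (exp (- \<kappa> * (\<Sum>m\<in>U. (y m)\<^sup>2))) \<partial>PiM I (\<lambda>_. gauss))
       = ennreal ((1 / sqrt (1 + 2 * \<kappa>)) ^ card U)"
proof -
  let ?g = "\<lambda>m x. if m \<in> U then exp (- \<kappa> * x\<^sup>2) else 1"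
  have "(\<Prod>m\<in>I. ?g m (y m)) = (\<Prod>m\<in>U. exp (- \<kappa> * (y m)\<^sup>2))" for y
    by (rule prod.mono_neutral_cong_right[OF I U]) auto
  then have "exp (- \<kappa> * (\<Sum>m\<in>U. (y m)\<^sup>2)) = (\<Prod>m\<in>I. ?g m (y m))" for y
    using finite_subset[OF U I] by (simp add: exp_sum sum_distrib_left)
  then have "(\<integral>\<^sup>+y. ennreal (exp (- \<kappa> * (\<Sum>m\<in>U. (y m)\<^sup>2))) \<partial>PiM I (\<lambda>_. gauss))
      = (\<integral>\<^sup>+y. (\<Prod>m\<in>I. ennreal (?g m (y m))) \<partial>PiM I (\<lambda>_. gauss))"
    by (simp add: prod_ennreal)
  also have "\<dots> = (\<Prod>m\<in>I. \<integral>\<^sup>+x. ennreal (?g m x) \<partial>gauss)"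
    by (rule gauss_product.product_nn_integral_prod) (use I in auto)
  also have "\<dots> = (\<Prod>m\<in>I. if m \<in> U then ennreal (1 / sqrt (1 + 2 * \<kappa>)) else 1)"
    using nn_integral_gauss_exp_square[OF \<kappa>] prob_space.emeasure_space_1[OF prob_space_gauss]
    by (intro prod.cong) auto
  also have "\<dots> = (\<Prod>m\<in>U. ennreal (1 / sqrt (1 + 2 * \<kappa>)))"
    by (rule prod.mono_neutral_cong_right[OF I U]) auto
  also have "\<dots> = ennreal ((1 / sqrt (1 + 2 * \<kappa>)) ^ card U)"
    using \<kappa> by (simp add: ennreal_power)
  finally show ?thesis .
qed

lemma indep_vars_PiM_gauss_components:
  assumes "finite I" "I \<noteq> {}"
  shows "prob_space.indep_vars (PiM I (\<lambda>_. gauss)) (\<lambda>_. gauss) (\<lambda>m z. z m) I"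
proof -
  interpret P: prob_space "PiM I (\<lambda>_. gauss)" by (rule prob_space_PiM) simp
  have "distr (PiM I (\<lambda>_. gauss)) (PiM I (\<lambda>_. gauss)) (\<lambda>x. \<lambda>i\<in>I. x i)
      = distr (PiM I (\<lambda>_. gauss)) (PiM I (\<lambda>_. gauss)) (\<lambda>x. x)"
    by (rule distr_cong) (auto simp: space_PiM)
  also have "\<dots> = PiM I (\<lambda>i. distr (PiM I (\<lambda>_. gauss)) gauss (\<lambda>z. z i))"
    by (auto intro!: PiM_cong simp: distr_PiM_gauss_component)
  finally show ?thesis
    using assms by (subst P.indep_vars_iff_distr_eq_PiM') auto
qed

lemma distributed_PiM_gauss_lincomb:
  assumes fin: "finite J" and pos: "0 < (\<Sum>m\<in>J. (w m)\<^sup>2)"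
  shows "distributed (PiM J (\<lambda>_. gauss)) lborel (\<lambda>z. \<Sum>m\<in>J. w m * z m)
           (normal_density 0 (sqrt (\<Sum>m\<in>J. (w m)\<^sup>2)))"
proof -
  interpret P: prob_space "PiM J (\<lambda>_. gauss)" by (rule prob_space_PiM) simp
  define J' where "J' = {m \<in> J. w m \<noteq> 0}"
  have fin': "finite J'" and sub: "J' \<subseteq> J" using fin by (auto simp: J'_def)
  have ne: "J' \<noteq> {}"
    using pos by (auto simp: J'_def intro: ccontr)
  have sum_J': "(\<Sum>m\<in>J. f m) = (\<Sum>m\<in>J'. f m)" if "\<And>m. w m = 0 \<Longrightarrow> f m = 0" for f :: "_ \<Rightarrow> real"
    using that by (intro sum.mono_neutral_right[OF fin sub]) (auto simp: J'_def)
  have "P.indep_vars (\<lambda>_. gauss) (\<lambda>m z. z m) J'"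
    using P.indep_vars_subset[OF indep_vars_PiM_gauss_components[OF fin] sub] ne sub by blast
  then have ind: "P.indep_vars (\<lambda>_. borel) (\<lambda>m z. w m * z m) J'"
    by (rule P.indep_vars_compose2[where Y="\<lambda>m t. w m * t", simplified])
       (simp add: measurable_cong_sets[OF sets_gauss refl])
  have std: "distributed (PiM J (\<lambda>_. gauss)) lborel (\<lambda>z. z m) (normal_density 0 1)" if "m \<in> J" for m
  proof -
    have "distr (PiM J (\<lambda>_. gauss)) lborel (\<lambda>z. z m) = distr (PiM J (\<lambda>_. gauss)) gauss (\<lambda>z. z m)"
      by (rule distr_cong) auto
    also have "\<dots> = gauss" using that by (rule distr_PiM_gauss_component)
    finally show ?thesis unfolding distributed_def gauss_def using that by auto
  qed
  have "distributed (PiM J (\<lambda>_. gauss)) lborel (\<lambda>z. w m * z m) (normal_density 0 \<bar>w m\<bar>)" if "m \<in> J'" for m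
    using P.normal_density_affine[OF std, of m "w m" 0] that by (auto simp: J'_def)
  then have "distributed (PiM J (\<lambda>_. gauss)) lborel (\<lambda>z. \<Sum>m\<in>J'. w m * z m)
          (normal_density (\<Sum>m\<in>J'. 0) (sqrt (\<Sum>m\<in>J'. \<bar>w m\<bar>\<^sup>2)))"
    by (intro P.sum_indep_normal[OF fin' ne ind]) (auto simp: J'_def)
  then show ?thesis by (simp add: sum_J'[of "\<lambda>m. (w m)\<^sup>2"] sum_J'[of "\<lambda>m. w m * _ m"])
qed

lemma emeasure_PiM_gauss_lincomb_tail:
  assumes fin: "finite J" and pos: "0 < (\<Sum>m\<in>J. (w m)\<^sup>2)" and x: "0 \<le> x"
  shows "emeasure (PiM J (\<lambda>_. gauss)) {z \<in> space (PiM J (\<lambda>_. gauss)). x \<le> \<bar>\<Sum>m\<in>J. w m * z m\<bar>}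
           \<le> exp (- x\<^sup>2 / (2 * (\<Sum>m\<in>J. (w m)\<^sup>2)))"
proof -
  let ?P = "PiM J (\<lambda>_. gauss)"
  let ?S = "\<lambda>z. \<Sum>m\<in>J. w m * z m"
  let ?v = "\<Sum>m\<in>J. (w m)\<^sup>2"
  have D: "distributed ?P lborel ?S (normal_density 0 (sqrt ?v))"
    by (rule distributed_PiM_gauss_lincomb[OF fin pos])
  then have S: "?S \<in> measurable ?P lborel" by (simp add: distributed_def)
  have "{z \<in> space ?P. x \<le> \<bar>?S z\<bar>} = ?S -` {y. x \<le> \<bar>y\<bar>} \<inter> space ?P" by auto
  then have "emeasure ?P {z \<in> space ?P. x \<le> \<bar>?S z\<bar>} = emeasure (distr ?P lborel ?S) {y. x \<le> \<bar>y\<bar>}"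
    by (simp add: emeasure_distr[OF S])
  also have "\<dots> = emeasure (density lborel (normal_density 0 (sqrt ?v))) {y. x \<le> \<bar>y\<bar>}"
    using D by (simp add: distributed_def)
  also have "\<dots> \<le> exp (- x\<^sup>2 / (2 * (sqrt ?v)\<^sup>2))"
    using pos x by (intro normal_tail_le) auto
  finally show ?thesis using pos by simp
qed

section \<open>Thresholding a Gaussian statistic\<close>

lemma threshold_false_positive_exponent_le:
  fixes N a sp L v t :: real
  assumes N: "0 < N" and a: "0 < a" and v: "0 < v" "v \<le> sp" and L: "0 \<le> L"
    and t: "t = a * N / 2 + sp * L / (a * N)"
  shows "exp (- (t * N)\<^sup>2 / (2 * (N\<^sup>2 * v))) \<le> exp (- L / 2) * exp (- (a\<^sup>2 / (8 * sp)) * N\<^sup>2)"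
proof -
  have sp: "0 < sp" using v by simp
  define A B where "A = a * N / 2" and "B = sp * L / (a * N)"
  \<comment> \<open>the shift \<open>B\<close> of the threshold is tuned so that the cross term \<open>2 A B\<close> of \<open>t\<^sup>2\<close> equals \<open>sp L\<close>\<close>
  have "0 \<le> A" "0 \<le> B" "2 * A * B = sp * L" "t = A + B"
    using N a L sp by (simp_all add: A_def B_def t)
  then have "(A\<^sup>2 + sp * L) / (2 * sp) \<le> t\<^sup>2 / (2 * sp)"
    using sp by (intro divide_right_mono) (auto simp: power2_eq_square algebra_simps)
  also have "\<dots> \<le> t\<^sup>2 / (2 * v)" using v by (intro divide_left_mono) auto
  also have "\<dots> = (t * N)\<^sup>2 / (2 * (N\<^sup>2 * v))" using N by (simp add: power_mult_distrib)
  also have "(A\<^sup>2 + sp * L) / (2 * sp) = L / 2 + (a\<^sup>2 / (8 * sp)) * N\<^sup>2"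
    using sp by (simp add: A_def power_mult_distrib field_simps)
  finally show ?thesis by (simp add: mult_exp_exp)
qed

lemma threshold_false_negative_exponent_le:
  fixes N a sp L v t :: real
  assumes N: "0 < N" and a: "0 < a" and v: "0 < v" "v \<le> sp"
    and t: "t = a * N / 2 + sp * L / (a * N)"
  shows "exp (- (N * (a * N - t))\<^sup>2 / (2 * (N\<^sup>2 * v))) \<le> exp (L / 2) * exp (- (a\<^sup>2 / (8 * sp)) * N\<^sup>2)"
proof -
  have sp: "0 < sp" using v by simp
  define A B where "A = a * N / 2" and "B = sp * L / (a * N)"
  have AB: "2 * A * B = sp * L" and diff: "a * N - t = A - B"
    using N a by (simp_all add: A_def B_def t)
  have "A\<^sup>2 - sp * L \<le> (a * N - t)\<^sup>2"
    unfolding diff AB[symmetric] by (simp add: power2_eq_square algebra_simps)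
  then have "(A\<^sup>2 - sp * L) / (2 * sp) \<le> (a * N - t)\<^sup>2 / (2 * sp)"
    using sp by (intro divide_right_mono) auto
  also have "\<dots> \<le> (a * N - t)\<^sup>2 / (2 * v)" using v by (intro divide_left_mono) auto
  also have "\<dots> = (N * (a * N - t))\<^sup>2 / (2 * (N\<^sup>2 * v))" using N by (simp add: power_mult_distrib)
  also have "(A\<^sup>2 - sp * L) / (2 * sp) = - L / 2 + (a\<^sup>2 / (8 * sp)) * N\<^sup>2"
    using sp by (simp add: A_def power_mult_distrib field_simps)
  finally show ?thesis by (simp add: mult_exp_exp)
qed

lemma threshold_false_negative_bound_ge_one:
  fixes N a sp L t :: real
  assumes N: "0 \<le> N" and a: "0 < a" and sp: "0 < sp" and L: "0 \<le> L"
    and t: "t = a * N / 2 + sp * L / (a * N)" and below: "a * N \<le> t"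
  shows "1 \<le> exp (L / 2) * exp (- (a\<^sup>2 / (8 * sp)) * N\<^sup>2)"
proof (cases "N = 0")
  case False
  define B where "B = sp * L / (a * N)"
  have "t = a * N / 2 + B" by (simp add: t B_def)
  then have "a * N / 2 \<le> B" using below by linarith
  then have "a * N / 2 \<le> sp * L / (a * N)" by (simp add: B_def)
  then have "(a * N)\<^sup>2 \<le> 2 * sp * L" using N False a by (simp add: field_simps power2_eq_square)
  then have "(a\<^sup>2 / (8 * sp)) * N\<^sup>2 \<le> L / 4" using sp by (simp add: field_simps power_mult_distrib)
  then show ?thesis using L by (simp add: mult_exp_exp)
qed (use L in simp)

lemma emeasure_PiM_gauss_false_positive:
  assumes J: "finite J" and w: "(\<Sum>m\<in>J. (w m)\<^sup>2) = N\<^sup>2 * v"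
    and N: "0 \<le> N" and a: "0 < a" and v: "0 < v" "v \<le> sp" and L: "0 \<le> L"
    and t: "t = a * N / 2 + sp * L / (a * N)"
  shows "emeasure (PiM J (\<lambda>_. gauss)) {z \<in> space (PiM J (\<lambda>_. gauss)). t < \<bar>\<Sum>m\<in>J. w m * z m\<bar> / N}
    \<le> exp (- L / 2) * exp (- (a\<^sup>2 / (8 * sp)) * N\<^sup>2)"
proof (cases "N = 0")
  case True
  \<comment> \<open>then \<open>t = 0\<close> and the statistic is \<open>0\<close>, since division by zero yields zero\<close>
  then show ?thesis by (simp add: t)
next
  case False
  then have N: "0 < N" using N by simp
  have "t \<ge> 0" using N a v L by (simp add: t)
  have "{z \<in> space (PiM J (\<lambda>_. gauss)). t < \<bar>\<Sum>m\<in>J. w m * z m\<bar> / N}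
      \<subseteq> {z \<in> space (PiM J (\<lambda>_. gauss)). t * N \<le> \<bar>\<Sum>m\<in>J. w m * z m\<bar>}"
    using N by (auto simp: field_simps)
  moreover have "{z \<in> space (PiM J (\<lambda>_. gauss)). t * N \<le> \<bar>\<Sum>m\<in>J. w m * z m\<bar>} \<in> sets (PiM J (\<lambda>_. gauss))"
    by measurable
  ultimately have "emeasure (PiM J (\<lambda>_. gauss)) {z \<in> space (PiM J (\<lambda>_. gauss)). t < \<bar>\<Sum>m\<in>J. w m * z m\<bar> / N}
      \<le> emeasure (PiM J (\<lambda>_. gauss)) {z \<in> space (PiM J (\<lambda>_. gauss)). t * N \<le> \<bar>\<Sum>m\<in>J. w m * z m\<bar>}"
    by (rule emeasure_mono)
  also have "\<dots> \<le> exp (- (t * N)\<^sup>2 / (2 * (N\<^sup>2 * v)))"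
    using emeasure_PiM_gauss_lincomb_tail[OF J, of w "t * N"] w N v \<open>t \<ge> 0\<close> by simp
  also have "\<dots> \<le> exp (- L / 2) * exp (- (a\<^sup>2 / (8 * sp)) * N\<^sup>2)"
    by (intro ennreal_leI threshold_false_positive_exponent_le[OF N a v L t])
  finally show ?thesis .
qed

lemma emeasure_PiM_gauss_false_negative:
  assumes J: "finite J" and w: "(\<Sum>m\<in>J. (w m)\<^sup>2) = N\<^sup>2 * v"
    and N: "0 \<le> N" and a: "0 < a" and v: "0 < v" "v \<le> sp" and L: "0 \<le> L" and b: "a \<le> \<bar>b\<bar>"
    and t: "t = a * N / 2 + sp * L / (a * N)"
  shows "emeasure (PiM J (\<lambda>_. gauss)) {z \<in> space (PiM J (\<lambda>_. gauss)). \<not> t < \<bar>b * N\<^sup>2 + (\<Sum>m\<in>J. w m * z m)\<bar> / N}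
    \<le> exp (L / 2) * exp (- (a\<^sup>2 / (8 * sp)) * N\<^sup>2)"
proof (cases "0 < N \<and> t < a * N")
  case False
  interpret prob_space "PiM J (\<lambda>_. gauss)" by (rule prob_space_PiM) simp
  have "a * N \<le> t"
  proof (cases "N = 0")
    case True
    then show ?thesis by (simp add: t)
  qed (use False N in auto)
  then have "1 \<le> exp (L / 2) * exp (- (a\<^sup>2 / (8 * sp)) * N\<^sup>2)"
    using v by (intro threshold_false_negative_bound_ge_one[OF N a _ L t]) auto
  then have "ennreal 1 \<le> exp (L / 2) * exp (- (a\<^sup>2 / (8 * sp)) * N\<^sup>2)"
    by (rule ennreal_leI)
  then show ?thesis
    using emeasure_le_1 order_trans unfolding ennreal_1 by blast
next
  case True
  then have N: "0 < N" and above: "t < a * N" by auto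
  let ?S = "\<lambda>z. \<Sum>m\<in>J. w m * z m"
  have "N * (a * N - t) \<le> \<bar>?S z\<bar>" if "\<not> t < \<bar>b * N\<^sup>2 + ?S z\<bar> / N" for z
  proof -
    have "\<bar>b * N\<^sup>2 + ?S z\<bar> \<le> t * N" using that N by (simp add: field_simps)
    moreover have "a * N\<^sup>2 \<le> \<bar>b\<bar> * N\<^sup>2" using b by (simp add: mult_right_mono)
    moreover have "\<bar>b\<bar> * N\<^sup>2 \<le> \<bar>b * N\<^sup>2 + ?S z\<bar> + \<bar>?S z\<bar>"
      using abs_triangle_ineq4[of "b * N\<^sup>2 + ?S z" "?S z"] by (simp add: abs_mult)
    moreover have "N * (a * N - t) = a * N\<^sup>2 - t * N" by (simp add: power2_eq_square algebra_simps)
    ultimately show ?thesis by linarith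
  qed
  moreover have "{z \<in> space (PiM J (\<lambda>_. gauss)). N * (a * N - t) \<le> \<bar>?S z\<bar>} \<in> sets (PiM J (\<lambda>_. gauss))"
    by measurable
  ultimately have "emeasure (PiM J (\<lambda>_. gauss)) {z \<in> space (PiM J (\<lambda>_. gauss)). \<not> t < \<bar>b * N\<^sup>2 + ?S z\<bar> / N}
      \<le> emeasure (PiM J (\<lambda>_. gauss)) {z \<in> space (PiM J (\<lambda>_. gauss)). N * (a * N - t) \<le> \<bar>?S z\<bar>}"
    by (intro emeasure_mono) blast+
  also have "\<dots> \<le> exp (- (N * (a * N - t))\<^sup>2 / (2 * (N\<^sup>2 * v)))"
    using emeasure_PiM_gauss_lincomb_tail[OF J, of w "N * (a * N - t)"] w N v above by simp
  also have "\<dots> \<le> exp (L / 2) * exp (- (a\<^sup>2 / (8 * sp)) * N\<^sup>2)"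
    by (intro ennreal_leI threshold_false_negative_exponent_le[OF N a v t])
  finally show ?thesis .
qed

lemma emeasure_PiM_gauss_threshold_error:
  assumes J: "finite J" and w: "(\<Sum>m\<in>J. (w m)\<^sup>2) = N\<^sup>2 * v"
    and N: "0 \<le> N" and a: "0 < a" and v: "0 < v" "v \<le> sp" and L: "0 \<le> L"
    and b: "b \<noteq> 0 \<Longrightarrow> a \<le> \<bar>b\<bar>" and t: "t = a * N / 2 + sp * L / (a * N)"
  shows "emeasure (PiM J (\<lambda>_. gauss))
      {z \<in> space (PiM J (\<lambda>_. gauss)). (t < \<bar>b * N\<^sup>2 + (\<Sum>m\<in>J. w m * z m)\<bar> / N) \<noteq> (b \<noteq> 0)}
    \<le> (if b = 0 then exp (- L / 2) else exp (L / 2)) * exp (- (a\<^sup>2 / (8 * sp)) * N\<^sup>2)"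
proof (cases "b = 0")
  case True
  then show ?thesis
    using emeasure_PiM_gauss_false_positive[OF J w N a v L t] by simp
next
  case False
  then show ?thesis
    using emeasure_PiM_gauss_false_negative[OF J w N a v L b t] by simp
qed

section \<open>The sample space\<close>

lemma prob_space_model: "prob_space (model n p)"
  unfolding model_def by (intro prob_space_pair prob_space_PiM) auto

lemma measurable_model_design [measurable]: "(\<lambda>\<omega>. fst \<omega> x) \<in> borel_measurable (model n p)"
proof (cases "x \<in> {..<n} \<times> {..<p}")
  case True
  show ?thesis unfolding model_def
    by (rule measurable_compose[OF measurable_fst])
       (use True in \<open>simp add: measurable_cong_sets[OF refl sets_gauss, symmetric]\<close>)
next
  case False
  have "fst \<omega> x = undefined" if "\<omega> \<in> space (model n p)" for \<omega>
  proof -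
    have "fst \<omega> \<in> space (PiM ({..<n} \<times> {..<p}) (\<lambda>_. gauss))"
      using that unfolding model_def space_pair_measure by (auto simp: mem_Times_iff)
    then show ?thesis using False unfolding space_PiM by (rule PiE_arb)
  qed
  then show ?thesis by (subst measurable_cong[where g="\<lambda>_. undefined"]) auto
qed

lemma measurable_model_noise [measurable]: "(\<lambda>\<omega>. snd \<omega> x) \<in> borel_measurable (model n p)"
proof (cases "x < n")
  case True
  show ?thesis unfolding model_def
    by (rule measurable_compose[OF measurable_snd])
       (use True in \<open>simp add: measurable_cong_sets[OF refl sets_gauss, symmetric]\<close>)
next
  case False
  have "snd \<omega> x = undefined" if "\<omega> \<in> space (model n p)" for \<omega>
  proof -
    have "snd \<omega> \<in> space (PiM {..<n} (\<lambda>_. gauss))"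
      using that unfolding model_def space_pair_measure by (auto simp: mem_Times_iff)
    then show ?thesis unfolding space_PiM by (rule PiE_arb) (use False in simp)
  qed
  then show ?thesis by (subst measurable_cong[where g="\<lambda>_. undefined"]) auto
qed

definition first_subsample :: "nat \<Rightarrow> nat \<Rightarrow> (nat \<times> nat \<Rightarrow> real) \<times> (nat \<Rightarrow> real) \<Rightarrow> (nat \<times> nat \<Rightarrow> real) \<times> (nat \<Rightarrow> real)" where
  "first_subsample n1 p \<omega> =
     ((\<lambda>(r, j). if r < n1 \<and> j < p then fst \<omega> (r, j) else 0), (\<lambda>r. if r < n1 then snd \<omega> r else 0))"

lemma fit_first_subsample: "fit est n1 p \<sigma> \<beta> (first_subsample n1 p \<omega>) = fit est n1 p \<sigma> \<beta> \<omega>"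
proof -
  have "(\<lambda>(r, j). if r < n1 \<and> j < p then fst (first_subsample n1 p \<omega>) (r, j) else 0)
      = (\<lambda>(r, j). if r < n1 \<and> j < p then fst \<omega> (r, j) else 0)"
    and "(\<lambda>r. if r < n1 then Yv p \<sigma> \<beta> (first_subsample n1 p \<omega>) r else 0)
      = (\<lambda>r. if r < n1 then Yv p \<sigma> \<beta> \<omega> r else 0)"
    by (auto simp: fun_eq_iff first_subsample_def Yv_def)
  then show ?thesis unfolding fit_def by simp
qed

text \<open>The model is the image of one product of Gaussians over the disjoint union of its two index
  sets; this lets Fubini regroup the coordinates of design and noise together.\<close>

definition sum_split :: "'a set \<Rightarrow> 'b set \<Rightarrow> ('a + 'b \<Rightarrow> real) \<Rightarrow> ('a \<Rightarrow> real) \<times> ('b \<Rightarrow> real)" where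
  "sum_split I1 I2 h = ((\<lambda>x\<in>I1. h (Inl x)), (\<lambda>x\<in>I2. h (Inr x)))"

lemma measurable_sum_split [measurable]:
  "sum_split I1 I2 \<in> measurable (PiM (Inl ` I1 \<union> Inr ` I2) (\<lambda>_. gauss)) (PiM I1 (\<lambda>_. gauss) \<Otimes>\<^sub>M PiM I2 (\<lambda>_. gauss))"
  unfolding sum_split_def
  by (intro measurable_Pair measurable_restrict measurable_component_singleton) auto

lemma distr_PiM_gauss_reindex:
  "inj f \<Longrightarrow> distr (PiM (f ` I) (\<lambda>_. gauss)) (PiM I (\<lambda>_. gauss)) (\<lambda>g. \<lambda>x\<in>I. g (f x)) = PiM I (\<lambda>_. gauss)"
  using distr_PiM_reindex[of "f ` I" "\<lambda>_. gauss" f I] by (auto simp: inj_on_subset)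

lemma distr_sum_split_PiM_gauss:
  fixes I1 :: "'a set" and I2 :: "'b set"
  assumes "finite I1" "finite I2"
  shows "distr (PiM (Inl ` I1 \<union> Inr ` I2) (\<lambda>_. gauss)) (PiM I1 (\<lambda>_. gauss) \<Otimes>\<^sub>M PiM I2 (\<lambda>_. gauss)) (sum_split I1 I2)
       = PiM I1 (\<lambda>_. gauss) \<Otimes>\<^sub>M PiM I2 (\<lambda>_. gauss)"
proof -
  let ?A = "PiM (Inl ` I1 :: ('a + 'b) set) (\<lambda>_. gauss) \<Otimes>\<^sub>M PiM (Inr ` I2 :: ('a + 'b) set) (\<lambda>_. gauss)"
  let ?S = "Inl ` I1 \<union> Inr ` I2"
  let ?T = "PiM I1 (\<lambda>_. gauss) \<Otimes>\<^sub>M PiM I2 (\<lambda>_. gauss)"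
  let ?R1 = "\<lambda>g :: 'a + 'b \<Rightarrow> real. \<lambda>x\<in>I1. g (Inl x)"
  let ?R2 = "\<lambda>g :: 'a + 'b \<Rightarrow> real. \<lambda>x\<in>I2. g (Inr x)"
  have "PiM ?S (\<lambda>_. gauss) = distr ?A (PiM ?S (\<lambda>_. gauss)) (merge (Inl ` I1) (Inr ` I2))"
    using assms by (intro gauss_product.distr_merge[symmetric]) auto
  then have "distr (PiM ?S (\<lambda>_. gauss)) ?T (sum_split I1 I2)
      = distr (distr ?A (PiM ?S (\<lambda>_. gauss)) (merge (Inl ` I1) (Inr ` I2))) ?T (sum_split I1 I2)"
    by simp
  also have "\<dots> = distr ?A ?T (sum_split I1 I2 \<circ> merge (Inl ` I1) (Inr ` I2))"
    by (rule distr_distr) (auto intro: measurable_merge)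
  also have "\<dots> = distr ?A ?T (\<lambda>(g, h). (?R1 g, ?R2 h))"
    by (rule distr_cong) (auto simp: sum_split_def merge_def space_pair_measure fun_eq_iff)
  also have "\<dots> = distr (PiM (Inl ` I1) (\<lambda>_. gauss)) (PiM I1 (\<lambda>_. gauss)) ?R1
              \<Otimes>\<^sub>M distr (PiM (Inr ` I2) (\<lambda>_. gauss)) (PiM I2 (\<lambda>_. gauss)) ?R2"
    by (rule pair_measure_distr[symmetric])
       (auto intro!: measurable_restrict measurable_component_singleton prob_space_imp_sigma_finite prob_space_PiM
             simp: distr_PiM_gauss_reindex)
  also have "\<dots> = ?T"
    by (simp add: distr_PiM_gauss_reindex)
  finally show ?thesis .
qed

text \<open>Coordinates of the sample space: \<open>Inl (r, j)\<close> is the design entry \<open>X\<^sub>r\<^sub>j\<close>, \<open>Inr r\<close> the noise \<open>\<xi>\<^sub>r\<close>.\<close>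

definition first_sample_index :: "nat \<Rightarrow> nat \<Rightarrow> ((nat \<times> nat) + nat) set" where
  "first_sample_index n1 p = Inl ` ({..<n1} \<times> {..<p}) \<union> Inr ` {..<n1}"

definition second_column_index :: "nat \<Rightarrow> nat \<Rightarrow> nat \<Rightarrow> ((nat \<times> nat) + nat) set" where
  "second_column_index n1 n2 i = (\<lambda>k. Inl (n1 + k, i)) ` {..<n2}"

definition second_rest_index :: "nat \<Rightarrow> nat \<Rightarrow> nat \<Rightarrow> nat \<Rightarrow> ((nat \<times> nat) + nat) set" where
  "second_rest_index n1 n2 p i =
     (\<lambda>(k, j). Inl (n1 + k, j)) ` ({..<n2} \<times> ({..<p} - {i})) \<union> (\<lambda>k. Inr (n1 + k)) ` {..<n2}"

lemma finite_sample_index [simp]: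
  "finite (first_sample_index n1 p)" "finite (second_column_index n1 n2 i)" "finite (second_rest_index n1 n2 p i)"
  by (auto simp: first_sample_index_def second_column_index_def second_rest_index_def)

lemma sample_index_split:
  assumes i: "i < p"
  shows "Inl ` ({..<n1 + n2} \<times> {..<p}) \<union> Inr ` {..<n1 + n2}
           = (first_sample_index n1 p \<union> second_column_index n1 n2 i) \<union> second_rest_index n1 n2 p i"
    and "(first_sample_index n1 p \<union> second_column_index n1 n2 i) \<inter> second_rest_index n1 n2 p i = {}"
proof -
  have shift: "\<exists>k<n2. r = n1 + k" if "r < n1 + n2" "\<not> r < n1" for r
    using that by (intro exI[of _ "r - n1"]) auto
  show "Inl ` ({..<n1 + n2} \<times> {..<p}) \<union> Inr ` {..<n1 + n2}
           = (first_sample_index n1 p \<union> second_column_index n1 n2 i) \<union> second_rest_index n1 n2 p i"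
    using i
    by (auto simp: first_sample_index_def second_column_index_def second_rest_index_def image_iff)
       (use shift in fastforce)+
  show "(first_sample_index n1 p \<union> second_column_index n1 n2 i) \<inter> second_rest_index n1 n2 p i = {}"
    by (auto simp: first_sample_index_def second_column_index_def second_rest_index_def)
qed

lemma sum_second_rest_index:
  "(\<Sum>m\<in>second_rest_index n1 n2 p i. g m)
     = (\<Sum>k<n2. \<Sum>j\<in>{..<p} - {i}. g (Inl (n1 + k, j))) + (\<Sum>k<n2. g (Inr (n1 + k)))"
proof -
  have "(\<Sum>m\<in>second_rest_index n1 n2 p i. g m)
      = (\<Sum>m\<in>(\<lambda>(k, j). Inl (n1 + k, j)) ` ({..<n2} \<times> ({..<p} - {i})). g m)
        + (\<Sum>m\<in>(\<lambda>k. Inr (n1 + k)) ` {..<n2}. g m)"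
    unfolding second_rest_index_def by (rule sum.union_disjoint) auto
  also have "(\<Sum>m\<in>(\<lambda>(k, j). Inl (n1 + k, j)) ` ({..<n2} \<times> ({..<p} - {i})). g m)
      = (\<Sum>k<n2. \<Sum>j\<in>{..<p} - {i}. g (Inl (n1 + k, j)))"
    by (subst sum.reindex) (auto simp: inj_on_def case_prod_unfold sum.cartesian_product)
  also have "(\<Sum>m\<in>(\<lambda>k. Inr (n1 + k)) ` {..<n2}. g m) = (\<Sum>k<n2. g (Inr (n1 + k)))"
    by (subst sum.reindex) (auto simp: inj_on_def)
  finally show ?thesis .
qed

lemma sum_second_column_index:
  "(\<Sum>m\<in>second_column_index n1 n2 i. g m) = (\<Sum>k<n2. g (Inl (n1 + k, i)))"
  unfolding second_column_index_def by (subst sum.reindex) (auto simp: inj_on_def)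

lemma card_second_column_index: "card (second_column_index n1 n2 i) = n2"
  unfolding second_column_index_def by (subst card_image) (auto simp: inj_on_def)

definition merged_sample :: "nat \<Rightarrow> nat \<Rightarrow> nat \<Rightarrow> nat \<Rightarrow> ((nat \<times> nat) + nat \<Rightarrow> real)
    \<Rightarrow> ((nat \<times> nat) + nat \<Rightarrow> real) \<Rightarrow> (nat \<times> nat \<Rightarrow> real) \<times> (nat \<Rightarrow> real)" where
  "merged_sample n1 n2 p i y z = sum_split ({..<n1 + n2} \<times> {..<p}) {..<n1 + n2}
     (merge (first_sample_index n1 p \<union> second_column_index n1 n2 i) (second_rest_index n1 n2 p i) (y, z))"

lemma merged_sample_simps:
  "r < n1 \<Longrightarrow> j < p \<Longrightarrow> fst (merged_sample n1 n2 p i y z) (r, j) = y (Inl (r, j))"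
  "r < n1 \<Longrightarrow> snd (merged_sample n1 n2 p i y z) r = y (Inr r)"
  "k < n2 \<Longrightarrow> i < p \<Longrightarrow> fst (merged_sample n1 n2 p i y z) (n1 + k, i) = y (Inl (n1 + k, i))"
  "k < n2 \<Longrightarrow> j < p \<Longrightarrow> j \<noteq> i \<Longrightarrow> fst (merged_sample n1 n2 p i y z) (n1 + k, j) = z (Inl (n1 + k, j))"
  "k < n2 \<Longrightarrow> snd (merged_sample n1 n2 p i y z) (n1 + k) = z (Inr (n1 + k))"
  by (auto simp: merged_sample_def sum_split_def merge_def first_sample_index_def
      second_column_index_def second_rest_index_def image_iff)

lemma first_subsample_merged_sample:
  "first_subsample n1 p (merged_sample n1 n2 p i y z) = first_subsample n1 p (merged_sample n1 n2 p i y z')"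
  by (auto simp: first_subsample_def merged_sample_simps fun_eq_iff)

lemma emeasure_model_merged_sample:
  assumes i: "i < p" and A: "A \<in> sets (model (n1 + n2) p)"
  shows "emeasure (model (n1 + n2) p) A
    = (\<integral>\<^sup>+y. (\<integral>\<^sup>+z. indicator A (merged_sample n1 n2 p i y z) \<partial>PiM (second_rest_index n1 n2 p i) (\<lambda>_. gauss))
         \<partial>PiM (first_sample_index n1 p \<union> second_column_index n1 n2 i) (\<lambda>_. gauss))"
proof -
  let ?I = "first_sample_index n1 p \<union> second_column_index n1 n2 i"
  let ?J = "second_rest_index n1 n2 p i"
  let ?split = "sum_split ({..<n1 + n2} \<times> {..<p}) {..<n1 + n2}"
  let ?P = "PiM (Inl ` ({..<n1 + n2} \<times> {..<p}) \<union> Inr ` {..<n1 + n2}) (\<lambda>_. gauss)"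
  have split: "?split \<in> measurable ?P (model (n1 + n2) p)"
    unfolding model_def by (rule measurable_sum_split)
  have distr: "distr ?P (model (n1 + n2) p) ?split = model (n1 + n2) p"
    unfolding model_def by (rule distr_sum_split_PiM_gauss) auto
  have "emeasure (model (n1 + n2) p) A = (\<integral>\<^sup>+\<omega>. indicator A \<omega> \<partial>model (n1 + n2) p)"
    using A by simp
  also have "\<dots> = (\<integral>\<^sup>+h. indicator A (?split h) \<partial>?P)"
    by (subst distr[symmetric], subst nn_integral_distr[OF split]) (use A in auto)
  also have "\<dots> = (\<integral>\<^sup>+h. indicator A (?split h) \<partial>PiM (?I \<union> ?J) (\<lambda>_. gauss))"
    by (simp only: sample_index_split(1)[OF i])
  also have "\<dots> = (\<integral>\<^sup>+y. (\<integral>\<^sup>+z. indicator A (?split (merge ?I ?J (y, z))) \<partial>PiM ?J (\<lambda>_. gauss)) \<partial>PiM ?I (\<lambda>_. gauss))"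
    using sample_index_split[OF i] measurable_comp[OF split borel_measurable_indicator[OF A]]
    by (intro gauss_product.product_nn_integral_fold) (auto simp: comp_def)
  finally show ?thesis by (simp add: merged_sample_def)
qed

section \<open>Error of the selector\<close>

definition noise_weights :: "nat \<Rightarrow> real \<Rightarrow> (nat \<Rightarrow> real) \<Rightarrow> ((nat \<times> nat) + nat \<Rightarrow> real) \<Rightarrow> (nat \<times> nat) + nat \<Rightarrow> real" where
  "noise_weights i \<sigma> c y m = (case m of Inl (r, j) \<Rightarrow> y (Inl (r, i)) * c j | Inr r \<Rightarrow> \<sigma> * y (Inl (r, i)))"

lemma sum_noise_weights_squares:
  "(\<Sum>m\<in>second_rest_index n1 n2 p i. (noise_weights i \<sigma> c y m)\<^sup>2)
     = (\<Sum>k<n2. (y (Inl (n1 + k, i)))\<^sup>2) * (\<sigma>\<^sup>2 + (\<Sum>j\<in>{..<p} - {i}. (c j)\<^sup>2))"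
  by (simp add: sum_second_rest_index noise_weights_def power_mult_distrib algebra_simps
      sum_distrib_left sum_distrib_right sum.distrib)

lemma selector_statistic_merged_sample:
  fixes y z :: "(nat \<times> nat) + nat \<Rightarrow> real" and n1 n2 :: nat
  assumes i: "i < p"
  defines "\<omega> \<equiv> merged_sample n1 n2 p i y z"
  shows "(\<Sum>k<n2. fst \<omega> (n1 + k, i) * (Yv p \<sigma> \<beta> \<omega> (n1 + k) - (\<Sum>j\<in>{..<p} - {i}. fst \<omega> (n1 + k, j) * d j)))
    = \<beta> i * (\<Sum>k<n2. (y (Inl (n1 + k, i)))\<^sup>2)
      + (\<Sum>m\<in>second_rest_index n1 n2 p i. noise_weights i \<sigma> (\<lambda>j. \<beta> j - d j) y m * z m)"
proof -
  let ?x = "\<lambda>k. y (Inl (n1 + k, i))"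
  have row: "fst \<omega> (n1 + k, i) * (Yv p \<sigma> \<beta> \<omega> (n1 + k) - (\<Sum>j\<in>{..<p} - {i}. fst \<omega> (n1 + k, j) * d j))
      = \<beta> i * (?x k)\<^sup>2 + ((\<Sum>j\<in>{..<p} - {i}. ?x k * (\<beta> j - d j) * z (Inl (n1 + k, j))) + \<sigma> * ?x k * z (Inr (n1 + k)))"
    if k: "k < n2" for k
  proof -
    have "Yv p \<sigma> \<beta> \<omega> (n1 + k) = ?x k * \<beta> i + (\<Sum>j\<in>{..<p} - {i}. z (Inl (n1 + k, j)) * \<beta> j) + \<sigma> * z (Inr (n1 + k))"
      using i k by (simp add: Yv_def \<omega>_def sum.remove[of "{..<p}" i] merged_sample_simps)
    moreover have "(\<Sum>j\<in>{..<p} - {i}. fst \<omega> (n1 + k, j) * d j) = (\<Sum>j\<in>{..<p} - {i}. z (Inl (n1 + k, j)) * d j)"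
      using k by (intro sum.cong) (auto simp: \<omega>_def merged_sample_simps)
    moreover have "fst \<omega> (n1 + k, i) = ?x k" using i k by (simp add: \<omega>_def merged_sample_simps)
    ultimately show ?thesis
      by (simp add: algebra_simps power2_eq_square sum_distrib_left sum_subtractf)
  qed
  show ?thesis
    by (simp add: row sum.distrib sum_distrib_left sum_second_rest_index noise_weights_def)
qed

lemma sum_squares_remove_le_vnorm_squared:
  "i < p \<Longrightarrow> (\<Sum>j\<in>{..<p} - {i}. (u j)\<^sup>2) \<le> (vnorm p u)\<^sup>2"
  unfolding vnorm_def by (simp add: sum_nonneg sum_mono2)

lemma vnorm_col2_merged_sample:
  "i < p \<Longrightarrow> vnorm n2 (col2 n1 (merged_sample n1 n2 p i y z) i) = sqrt (\<Sum>k<n2. (y (Inl (n1 + k, i)))\<^sup>2)"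
  unfolding vnorm_def col2_def by (simp add: merged_sample_simps)

lemma nn_integral_selector_error_good_event_conditional:
  fixes bh :: "(nat \<times> nat \<Rightarrow> real) \<times> (nat \<Rightarrow> real) \<Rightarrow> nat \<Rightarrow> real"
    and n1 n2 p s i :: nat and \<sigma> \<delta> a :: real and \<beta> :: "nat \<Rightarrow> real"
  defines "M \<equiv> model (n1 + n2) p" and "\<sigma>' \<equiv> \<sigma> * sqrt (1 + \<delta>\<^sup>2)" and "L \<equiv> ln (real p / real s - 1)"
  defines "A \<equiv> {\<omega> \<in> space M. (selector (tthr a p s \<sigma>' n2) n1 n2 p \<sigma> \<beta> (bh \<omega>) \<omega> i \<noteq> (\<beta> i \<noteq> 0))
                  \<and> vnorm p (\<lambda>j. bh \<omega> j - \<beta> j) < \<delta> * \<sigma>}"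
  assumes i: "i < p" and bh: "\<And>\<omega>. bh \<omega> = bh (first_subsample n1 p \<omega>)"
    and \<sigma>: "0 < \<sigma>" and a: "0 < a" and L: "0 \<le> L" and \<beta>: "\<beta> i \<noteq> 0 \<Longrightarrow> a \<le> \<bar>\<beta> i\<bar>"
  shows "(\<integral>\<^sup>+z. indicator A (merged_sample n1 n2 p i y z) \<partial>PiM (second_rest_index n1 n2 p i) (\<lambda>_. gauss))
    \<le> (if \<beta> i = 0 then exp (- L / 2) else exp (L / 2))
        * exp (- (a\<^sup>2 / (8 * \<sigma>'\<^sup>2)) * (\<Sum>m\<in>second_column_index n1 n2 i. (y m)\<^sup>2))"
proof -
  let ?J = "second_rest_index n1 n2 p i"
  let ?\<omega> = "merged_sample n1 n2 p i"
  let ?c = "if \<beta> i = 0 then exp (- L / 2) else exp (L / 2)"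
  define d where "d = bh (?\<omega> y (\<lambda>_. 0))"
  have d: "bh (?\<omega> y z) = d" for z
    unfolding d_def by (subst (1 2) bh) (rule arg_cong[OF first_subsample_merged_sample])
  define N where "N = sqrt (\<Sum>k<n2. (y (Inl (n1 + k, i)))\<^sup>2)"
  define v where "v = \<sigma>\<^sup>2 + (\<Sum>j\<in>{..<p} - {i}. (\<beta> j - d j)\<^sup>2)"
  define t where "t = a * N / 2 + \<sigma>'\<^sup>2 * L / (a * N)"
  let ?w = "noise_weights i \<sigma> (\<lambda>j. \<beta> j - d j) y"
  have N: "0 \<le> N" and N2: "N\<^sup>2 = (\<Sum>k<n2. (y (Inl (n1 + k, i)))\<^sup>2)"
    by (simp_all add: N_def sum_nonneg)
  have error: "?\<omega> y z \<in> A \<Longrightarrow> (t < \<bar>\<beta> i * N\<^sup>2 + (\<Sum>m\<in>?J. ?w m * z m)\<bar> / N) \<noteq> (\<beta> i \<noteq> 0)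
                                   \<and> vnorm p (\<lambda>j. d j - \<beta> j) < \<delta> * \<sigma>" for z
    using i unfolding A_def selector_def
    by (simp add: d selector_statistic_merged_sample vnorm_col2_merged_sample tthr_def t_def N_def L_def sum_nonneg)
  show ?thesis
  proof (cases "vnorm p (\<lambda>j. d j - \<beta> j) < \<delta> * \<sigma>")
    case False
    then have "(\<lambda>z. indicator A (?\<omega> y z) :: ennreal) = (\<lambda>_. 0)"
      using error by (auto simp: fun_eq_iff indicator_def)
    then show ?thesis by simp
  next
    case True
    have "(\<Sum>j\<in>{..<p} - {i}. (\<beta> j - d j)\<^sup>2) \<le> (vnorm p (\<lambda>j. d j - \<beta> j))\<^sup>2"
      using sum_squares_remove_le_vnorm_squared[OF i, of "\<lambda>j. d j - \<beta> j"] by (simp add: power2_commute)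
    also have "\<dots> \<le> (\<delta> * \<sigma>)\<^sup>2"
      using True by (intro power_mono) (auto simp: vnorm_def sum_nonneg)
    finally have v: "0 < v" "v \<le> \<sigma>'\<^sup>2"
      using \<sigma> by (auto simp: v_def \<sigma>'_def power_mult_distrib algebra_simps add_pos_nonneg sum_nonneg)
    have w: "(\<Sum>m\<in>?J. (?w m)\<^sup>2) = N\<^sup>2 * v"
      by (simp add: sum_noise_weights_squares N2 v_def)
    have "(\<integral>\<^sup>+z. indicator A (?\<omega> y z) \<partial>PiM ?J (\<lambda>_. gauss))
        \<le> (\<integral>\<^sup>+z. indicator {z \<in> space (PiM ?J (\<lambda>_. gauss)).
              (t < \<bar>\<beta> i * N\<^sup>2 + (\<Sum>m\<in>?J. ?w m * z m)\<bar> / N) \<noteq> (\<beta> i \<noteq> 0)} z \<partial>PiM ?J (\<lambda>_. gauss))"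
      using error by (intro nn_integral_mono) (auto simp: indicator_def)
    also have "\<dots> \<le> ?c * exp (- (a\<^sup>2 / (8 * \<sigma>'\<^sup>2)) * N\<^sup>2)"
      by (subst nn_integral_indicator, measurable)
         (rule emeasure_PiM_gauss_threshold_error[OF _ w N a v L \<beta> t_def], simp)
    finally show ?thesis by (simp add: N2 sum_second_column_index)
  qed
qed

lemma emeasure_selector_error_good_event:
  fixes bh :: "(nat \<times> nat \<Rightarrow> real) \<times> (nat \<Rightarrow> real) \<Rightarrow> nat \<Rightarrow> real"
    and n1 n2 p s i :: nat and \<sigma> \<delta> a :: real and \<beta> :: "nat \<Rightarrow> real"
  defines "M \<equiv> model (n1 + n2) p" and "\<sigma>' \<equiv> \<sigma> * sqrt (1 + \<delta>\<^sup>2)" and "L \<equiv> ln (real p / real s - 1)"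
  defines "A \<equiv> {\<omega> \<in> space M. (selector (tthr a p s \<sigma>' n2) n1 n2 p \<sigma> \<beta> (bh \<omega>) \<omega> i \<noteq> (\<beta> i \<noteq> 0))
                  \<and> vnorm p (\<lambda>j. bh \<omega> j - \<beta> j) < \<delta> * \<sigma>}"
  assumes i: "i < p" and A: "A \<in> sets M"
    and bh: "\<And>\<omega>. bh \<omega> = bh (first_subsample n1 p \<omega>)"
    and \<sigma>: "0 < \<sigma>" and a: "0 < a" and L: "0 \<le> L" and \<beta>: "\<beta> i \<noteq> 0 \<Longrightarrow> a \<le> \<bar>\<beta> i\<bar>"
  shows "emeasure M A \<le> (if \<beta> i = 0 then exp (- L / 2) else exp (L / 2))
                          * exp (- real n2 / 2 * ln (1 + a\<^sup>2 / (4 * \<sigma>'\<^sup>2)))"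
proof -
  let ?I = "first_sample_index n1 p \<union> second_column_index n1 n2 i"
  let ?J = "second_rest_index n1 n2 p i"
  let ?\<omega> = "merged_sample n1 n2 p i"
  let ?c = "if \<beta> i = 0 then exp (- L / 2) else exp (L / 2)"
  define \<kappa> where "\<kappa> = a\<^sup>2 / (8 * \<sigma>'\<^sup>2)"
  have \<kappa>: "0 \<le> \<kappa>"
    by (simp add: \<kappa>_def)
  have conditional: "(\<integral>\<^sup>+z. indicator A (?\<omega> y z) \<partial>PiM ?J (\<lambda>_. gauss))
      \<le> ?c * exp (- \<kappa> * (\<Sum>m\<in>second_column_index n1 n2 i. (y m)\<^sup>2))" for y
    unfolding A_def M_def \<sigma>'_def L_def \<kappa>_def
    by (rule nn_integral_selector_error_good_event_conditional) (use i bh \<sigma> a L \<beta> in \<open>simp_all add: L_def\<close>)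
  have "emeasure M A = (\<integral>\<^sup>+y. (\<integral>\<^sup>+z. indicator A (?\<omega> y z) \<partial>PiM ?J (\<lambda>_. gauss)) \<partial>PiM ?I (\<lambda>_. gauss))"
    using A unfolding M_def by (rule emeasure_model_merged_sample[OF i])
  also have "\<dots> \<le> (\<integral>\<^sup>+y. ?c * ennreal (exp (- \<kappa> * (\<Sum>m\<in>second_column_index n1 n2 i. (y m)\<^sup>2))) \<partial>PiM ?I (\<lambda>_. gauss))"
    using conditional by (intro nn_integral_mono) (simp add: ennreal_mult)
  also have "\<dots> = ?c * (1 / sqrt (1 + 2 * \<kappa>)) ^ n2"
    by (subst nn_integral_cmult, simp, subst nn_integral_PiM_gauss_exp_sum_squares)
       (use \<kappa> in \<open>auto simp: card_second_column_index ennreal_mult\<close>)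
  also have "(1 / sqrt (1 + 2 * \<kappa>)) ^ n2 = exp (- real n2 / 2 * ln (1 + a\<^sup>2 / (4 * \<sigma>'\<^sup>2)))"
    by (subst power_inverse_sqrt_eq_exp_ln) (use \<kappa> in simp, simp add: \<kappa>_def)
  finally show ?thesis .
qed

lemma integral_hamming_eq_sum_measure:
  assumes "finite_measure M" and E: "\<And>i. {\<omega> \<in> space M. \<eta> \<omega> i \<noteq> (\<beta> i \<noteq> 0)} \<in> sets M"
  shows "(\<integral>\<omega>. real (hamming p (\<eta> \<omega>) \<beta>) \<partial>M) = (\<Sum>i<p. measure M {\<omega> \<in> space M. \<eta> \<omega> i \<noteq> (\<beta> i \<noteq> 0)})"
proof -
  interpret finite_measure M by fact
  have "real (hamming p (\<eta> \<omega>) \<beta>) = (\<Sum>i<p. indicator {\<omega> \<in> space M. \<eta> \<omega> i \<noteq> (\<beta> i \<noteq> 0)} \<omega>)"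
    if "\<omega> \<in> space M" for \<omega>
  proof -
    have "real (hamming p (\<eta> \<omega>) \<beta>) = (\<Sum>i\<in>{i \<in> {..<p}. \<eta> \<omega> i \<noteq> (\<beta> i \<noteq> 0)}. 1)"
      by (simp add: hamming_def)
    also have "\<dots> = (\<Sum>i<p. if \<eta> \<omega> i \<noteq> (\<beta> i \<noteq> 0) then 1 else 0)"
      by (rule sum.inter_filter) simp
    also have "\<dots> = (\<Sum>i<p. indicator {\<omega> \<in> space M. \<eta> \<omega> i \<noteq> (\<beta> i \<noteq> 0)} \<omega>)"
      using that by (intro sum.cong) (auto simp: indicator_def)
    finally show ?thesis .
  qed
  then have "(\<integral>\<omega>. real (hamming p (\<eta> \<omega>) \<beta>) \<partial>M)
      = (\<integral>\<omega>. (\<Sum>i<p. indicator {\<omega> \<in> space M. \<eta> \<omega> i \<noteq> (\<beta> i \<noteq> 0)} \<omega>) \<partial>M)"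
    by (rule Bochner_Integration.integral_cong[OF refl])
  also have "\<dots> = (\<Sum>i<p. \<integral>\<omega>. indicator {\<omega> \<in> space M. \<eta> \<omega> i \<noteq> (\<beta> i \<noteq> 0)} \<omega> \<partial>M)"
    using E by (intro Bochner_Integration.integral_sum integrable_real_indicator)
      (auto simp: emeasure_finite less_top[symmetric])
  also have "\<dots> = (\<Sum>i<p. measure M {\<omega> \<in> space M. \<eta> \<omega> i \<noteq> (\<beta> i \<noteq> 0)})"
    using E by (simp add: emeasure_finite)
  finally show ?thesis .
qed

lemma selector_error_bounds:
  fixes bh :: "(nat \<times> nat \<Rightarrow> real) \<times> (nat \<Rightarrow> real) \<Rightarrow> nat \<Rightarrow> real"
    and n1 n2 p s :: nat and \<sigma> \<delta> a q :: real and \<beta> :: "nat \<Rightarrow> real"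
  defines "M \<equiv> model (n1 + n2) p"
    and "\<eta> \<equiv> \<lambda>\<omega>. selector (tthr a p s (\<sigma> * sqrt (1 + \<delta>\<^sup>2)) n2) n1 n2 p \<sigma> \<beta> (bh \<omega>) \<omega>"
    and "c \<equiv> \<lambda>i. if \<beta> i = 0 then exp (- ln (real p / real s - 1) / 2) else exp (ln (real p / real s - 1) / 2)"
    and "m \<equiv> exp (- real n2 / 2 * ln (1 + a\<^sup>2 / (4 * \<sigma>\<^sup>2 * (1 + \<delta>\<^sup>2))))"
  assumes bh_meas [measurable]: "\<And>j. (\<lambda>\<omega>. bh \<omega> j) \<in> borel_measurable (model (n1 + n2) p)"
    and bh: "\<And>\<omega>. bh \<omega> = bh (first_subsample n1 p \<omega>)"
    and far: "measure M {\<omega> \<in> space M. \<delta> * \<sigma> \<le> vnorm p (\<lambda>j. bh \<omega> j - \<beta> j)} \<le> q"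
    and \<beta>: "\<beta> \<in> Omega p s a" and \<sigma>: "0 < \<sigma>" and a: "0 < a" and L: "0 \<le> ln (real p / real s - 1)"
  shows "(\<integral>\<omega>. real (hamming p (\<eta> \<omega>) \<beta>) \<partial>M) \<le> real p * q + (\<Sum>i<p. c i) * m"
    and "measure M {\<omega> \<in> space M. \<exists>i<p. \<eta> \<omega> i \<noteq> (\<beta> i \<noteq> 0)} \<le> q + (\<Sum>i<p. c i) * m"
proof -
  interpret prob_space M unfolding M_def by (rule prob_space_model)
  define E where "E i = {\<omega> \<in> space M. \<eta> \<omega> i \<noteq> (\<beta> i \<noteq> 0)}" for i
  define G where "G = {\<omega> \<in> space M. vnorm p (\<lambda>j. bh \<omega> j - \<beta> j) < \<delta> * \<sigma>}"
  define F where "F = {\<omega> \<in> space M. \<delta> * \<sigma> \<le> vnorm p (\<lambda>j. bh \<omega> j - \<beta> j)}"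
  have E_sets: "E i \<in> sets M" for i
    unfolding E_def \<eta>_def M_def selector_def tthr_def vnorm_def col2_def Yv_def by measurable
  have G_sets: "G \<in> sets M"
    unfolding G_def M_def vnorm_def by measurable
  have F_sets: "F \<in> sets M"
    unfolding F_def M_def vnorm_def by measurable
  have good: "measure M (E i \<inter> G) \<le> c i * m" if i: "i < p" for i
  proof -
    have eq: "E i \<inter> G = {\<omega> \<in> space (model (n1 + n2) p).
        (selector (tthr a p s (\<sigma> * sqrt (1 + \<delta>\<^sup>2)) n2) n1 n2 p \<sigma> \<beta> (bh \<omega>) \<omega> i \<noteq> (\<beta> i \<noteq> 0))
        \<and> vnorm p (\<lambda>j. bh \<omega> j - \<beta> j) < \<delta> * \<sigma>}"
      by (auto simp: E_def G_def \<eta>_def M_def)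
    have "emeasure M (E i \<inter> G)
        \<le> c i * exp (- real n2 / 2 * ln (1 + a\<^sup>2 / (4 * (\<sigma> * sqrt (1 + \<delta>\<^sup>2))\<^sup>2)))"
      unfolding eq c_def M_def
    proof (rule emeasure_selector_error_good_event[where bh = bh, OF i _ bh \<sigma> a L])
      show "{\<omega> \<in> space (model (n1 + n2) p).
        (selector (tthr a p s (\<sigma> * sqrt (1 + \<delta>\<^sup>2)) n2) n1 n2 p \<sigma> \<beta> (bh \<omega>) \<omega> i \<noteq> (\<beta> i \<noteq> 0))
        \<and> vnorm p (\<lambda>j. bh \<omega> j - \<beta> j) < \<delta> * \<sigma>} \<in> sets (model (n1 + n2) p)"
        using sets.Int[OF E_sets[of i] G_sets] by (simp only: eq M_def)
    qed (use \<beta> i in \<open>auto simp: Omega_def\<close>)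
    then show ?thesis
      by (simp add: emeasure_eq_measure c_def m_def power_mult_distrib mult.assoc)
  qed
  have "E i \<subseteq> F \<union> (E i \<inter> G)" for i by (auto simp: E_def G_def F_def)
  then have split: "measure M (E i) \<le> measure M F + measure M (E i \<inter> G)" for i
    using E_sets F_sets G_sets by (intro order_trans[OF finite_measure_mono measure_subadditive]) auto
  have "(\<integral>\<omega>. real (hamming p (\<eta> \<omega>) \<beta>) \<partial>M) = (\<Sum>i<p. measure M (E i))"
    unfolding E_def by (intro integral_hamming_eq_sum_measure finite_measure_axioms E_sets[unfolded E_def])
  also have "\<dots> \<le> (\<Sum>i<p. q + c i * m)"
  proof (intro sum_mono)
    show "measure M (E i) \<le> q + c i * m" if "i \<in> {..<p}" for i
      using split[of i] far good[of i] that unfolding F_def by simp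
  qed
  finally show "(\<integral>\<omega>. real (hamming p (\<eta> \<omega>) \<beta>) \<partial>M) \<le> real p * q + (\<Sum>i<p. c i) * m"
    by (simp add: sum.distrib sum_distrib_right)
  have "{\<omega> \<in> space M. \<exists>i<p. \<eta> \<omega> i \<noteq> (\<beta> i \<noteq> 0)} \<subseteq> F \<union> (\<Union>i<p. E i \<inter> G)"
    by (auto simp: E_def G_def F_def)
  then have "measure M {\<omega> \<in> space M. \<exists>i<p. \<eta> \<omega> i \<noteq> (\<beta> i \<noteq> 0)} \<le> measure M F + measure M (\<Union>i<p. E i \<inter> G)"
    using E_sets F_sets G_sets by (intro order_trans[OF finite_measure_mono measure_subadditive]) auto
  also have "measure M (\<Union>i<p. E i \<inter> G) \<le> (\<Sum>i<p. measure M (E i \<inter> G))"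
    using E_sets G_sets by (intro finite_measure_subadditive_finite) auto
  also have "\<dots> \<le> (\<Sum>i<p. c i) * m"
    unfolding sum_distrib_right using good by (intro sum_mono) simp
  finally show "measure M {\<omega> \<in> space M. \<exists>i<p. \<eta> \<omega> i \<noteq> (\<beta> i \<noteq> 0)} \<le> q + (\<Sum>i<p. c i) * m"
    using far unfolding F_def by linarith
qed

lemma sqrt_odds_mult:
  fixes x y :: real
  assumes "0 < x" "x < y"
  shows "x * exp (ln (y / x - 1) / 2) = sqrt (x * (y - x))"
    and "(y - x) * exp (- ln (y / x - 1) / 2) = sqrt (x * (y - x))"
proof -
  have odds: "y / x - 1 = (y - x) / x" and "0 < y / x - 1" using assms by (simp_all add: field_simps)
  then have "exp (ln (y / x - 1) / 2) = sqrt (y / x - 1)"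
    using assms by (simp add: powr_half_sqrt[symmetric] powr_def del: ln_div)
  also have "\<dots> = sqrt (y - x) / sqrt x"
    by (simp only: odds real_sqrt_divide)
  finally have e: "exp (ln (y / x - 1) / 2) = sqrt (y - x) / sqrt x" .
  have "x * exp (ln (y / x - 1) / 2) = x / sqrt x * sqrt (y - x)"
    by (simp add: e)
  also have "\<dots> = sqrt (x * (y - x))"
    using assms by (simp add: real_div_sqrt real_sqrt_mult)
  finally show "x * exp (ln (y / x - 1) / 2) = sqrt (x * (y - x))" .
  have "(y - x) * exp (- ln (y / x - 1) / 2) = (y - x) / sqrt (y - x) * sqrt x"
    by (simp add: exp_minus e)
  also have "\<dots> = sqrt (x * (y - x))"
    using assms by (simp add: real_div_sqrt real_sqrt_mult)
  finally show "(y - x) * exp (- ln (y / x - 1) / 2) = sqrt (x * (y - x))" .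
qed

lemma sum_selector_weights_le:
  fixes p s :: nat and \<beta> :: "nat \<Rightarrow> real"
  defines "L \<equiv> ln (real p / real s - 1)"
  assumes \<beta>: "sparse p s \<beta>" and s: "1 \<le> s" and sp: "2 * real s \<le> real p"
  shows "(\<Sum>i<p. if \<beta> i = 0 then exp (- L / 2) else exp (L / 2)) \<le> 2 * sqrt (real s * (real p - real s))"
proof -
  define k where "k = card {j \<in> {..<p}. \<beta> j \<noteq> 0}"
  have k: "k \<le> s" using \<beta> by (simp add: sparse_def l0_def k_def)
  have s0: "0 < real s" "real s < real p" using s sp by auto
  have "{j \<in> {..<p}. \<beta> j = 0} \<union> {j \<in> {..<p}. \<beta> j \<noteq> 0} = {..<p}" by auto
  moreover have "card {j \<in> {..<p}. \<beta> j = 0} + k = card ({j \<in> {..<p}. \<beta> j = 0} \<union> {j \<in> {..<p}. \<beta> j \<noteq> 0})"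
    unfolding k_def by (rule card_Un_disjoint[symmetric]) auto
  ultimately have "card {j \<in> {..<p}. \<beta> j = 0} + k = p" by simp
  then have "(\<Sum>i<p. if \<beta> i = 0 then exp (- L / 2) else exp (L / 2))
      = (real p - real k) * exp (- L / 2) + real k * exp (L / 2)"
    by (simp add: sum.If_cases Int_def k_def flip: of_nat_add)
  also have "\<dots> \<le> (real p - real s) * exp (- L / 2) + real s * exp (L / 2)"
  proof -
    have "1 \<le> real p / real s - 1" using s0 sp by (simp add: field_simps)
    then have "0 \<le> (real s - real k) * (exp (L / 2) - exp (- L / 2))"
      using k by (simp add: L_def)
    then show ?thesis by (simp add: algebra_simps)
  qed
  also have "\<dots> = 2 * sqrt (real s * (real p - real s))"
    using sqrt_odds_mult[OF s0] by (simp add: L_def)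
  finally show ?thesis .
qed

theorem theorem4:
  fixes est :: "(nat \<times> nat \<Rightarrow> real) \<Rightarrow> (nat \<Rightarrow> real) \<Rightarrow> (nat \<Rightarrow> real)"
    and n1 n2 p s :: nat and A \<sigma> a \<delta> C0 C1 C2 :: real
  defines "M \<equiv> model (n1 + n2) p"
  defines "\<eta>hat \<equiv> (\<lambda>\<beta> \<omega>. selector (tthr a p s (\<sigma> * sqrt (1 + \<delta>\<^sup>2)) n2) n1 n2 p \<sigma> \<beta>
                              (fit est n1 p \<sigma> \<beta> \<omega>) \<omega>)"
  assumes A: "A \<ge> 16 + 4 * sqrt 2"
    and est_min: "\<forall>X Y. is_sqslope A (n1 + n2) n1 p X Y (est X Y)"
    and est_meas: "\<forall>\<beta> j. (\<lambda>\<omega>. fit est n1 p \<sigma> \<beta> \<omega> j) \<in> borel_measurable M"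
    and fact: "\<forall>\<delta>'. 0 < \<delta>' \<and> \<delta>' \<le> 1 \<and> real n1 > C0 / \<delta>'\<^sup>2 * real s * ln (exp 1 * real p / real s) \<longrightarrow>
                 (\<forall>\<beta>. sparse p s \<beta> \<longrightarrow>
                    measure M {\<omega> \<in> space M. vnorm p (\<lambda>j. fit est n1 p \<sigma> \<beta> \<omega> j - \<beta> j) \<ge> \<delta>' * \<sigma>}
                      \<le> C1 * (real s / (2 * real p)) powr (C2 * real s))"
    and \<sigma>: "\<sigma> > 0" and s1: "s \<ge> 1" and sp: "real s \<le> real p / 2"
    and a: "0 < a" "a \<le> \<sigma>"
    and \<delta>: "0 < \<delta>" "\<delta> \<le> 1"
    and n1: "real n1 > C0 / \<delta>\<^sup>2 * real s * ln (exp 1 * real p / real s)"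
    and n2: "real n2 \<ge> 4 * \<sigma>\<^sup>2 * ln (real p / real s - 1) / a\<^sup>2"
  shows "(\<forall>\<beta>\<in>Omega p s a.
           (\<integral>\<omega>. real (hamming p (\<eta>hat \<beta> \<omega>) \<beta>) \<partial>M)
             \<le> 2 * sqrt (real s * (real p - real s))
                   * exp (- real n2 / 2 * ln (1 + a\<^sup>2 / (4 * \<sigma>\<^sup>2 * (1 + \<delta>\<^sup>2))))
               + real s * exp (- real n2 / 24)
               + C1 * real p * (real s / (2 * real p)) powr (C2 * real s)) \<and>
         (\<forall>\<beta>\<in>Omega p s a.
           measure M {\<omega> \<in> space M. \<exists>i<p. \<eta>hat \<beta> \<omega> i \<noteq> (\<beta> i \<noteq> 0)}
             \<le> 2 * sqrt (real s * (real p - real s))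
                   * exp (- real n2 / 2 * ln (1 + a\<^sup>2 / (4 * \<sigma>\<^sup>2 * (1 + \<delta>\<^sup>2))))
               + real s * exp (- real n2 / 24)
               + C1 * (real s / (2 * real p)) powr (C2 * real s))"
proof -
  let ?q = "C1 * (real s / (2 * real p)) powr (C2 * real s)"
  let ?R = "2 * sqrt (real s * (real p - real s))"
  let ?m = "exp (- real n2 / 2 * ln (1 + a\<^sup>2 / (4 * \<sigma>\<^sup>2 * (1 + \<delta>\<^sup>2))))"
  have L: "0 \<le> ln (real p / real s - 1)"
    using s1 sp by (simp add: field_simps)
  have fit_meas: "(\<lambda>\<omega>. fit est n1 p \<sigma> \<beta> \<omega> j) \<in> borel_measurable (model (n1 + n2) p)" for \<beta> j
    using est_meas by (simp add: M_def)
  have bounds: "(\<integral>\<omega>. real (hamming p (\<eta>hat \<beta> \<omega>) \<beta>) \<partial>M) \<le> ?R * ?m + C1 * real p * (real s / (2 * real p)) powr (C2 * real s)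
      \<and> measure M {\<omega> \<in> space M. \<exists>i<p. \<eta>hat \<beta> \<omega> i \<noteq> (\<beta> i \<noteq> 0)} \<le> ?R * ?m + ?q"
    if \<beta>: "\<beta> \<in> Omega p s a" for \<beta>
  proof -
    have far: "measure M {\<omega> \<in> space M. \<delta> * \<sigma> \<le> vnorm p (\<lambda>j. fit est n1 p \<sigma> \<beta> \<omega> j - \<beta> j)} \<le> ?q"
      using fact \<delta> n1 \<beta> by (auto simp: Omega_def)
    have "(\<Sum>i<p. if \<beta> i = 0 then exp (- ln (real p / real s - 1) / 2) else exp (ln (real p / real s - 1) / 2)) * ?m
        \<le> ?R * ?m"
      using \<beta> s1 sp by (intro mult_right_mono sum_selector_weights_le) (auto simp: Omega_def)
    moreover have "real p * ?q = C1 * real p * (real s / (2 * real p)) powr (C2 * real s)" by simp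
    moreover note selector_error_bounds[OF fit_meas fit_first_subsample[symmetric] far[unfolded M_def] \<beta> \<sigma> a(1) L]
    ultimately show ?thesis
      unfolding M_def \<eta>hat_def by linarith
  qed
  have slack: "0 \<le> real s * exp (- real n2 / 24)" by simp
  show ?thesis
    by (intro conjI ballI; drule bounds; elim conjE; use slack in linarith)
qed

end
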